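(* Let $\mathfrak m\in\mathcal O_{\mathbb Z}$ and write $\mathfrak m=\mathfrak m[1]+\cdots+\mathfrak m[s]$, where $c_1>\cdots>c_s$ are the distinct ends of segments of $\mathfrak m$ and $\mathfrak m[i]$ consists of the segments (with multiplicity) ending at $c_i$. Assume $|\mathfrak m[i]|\le2$ for all $i$. Then no non-trivial decomposition of $\mathfrak m$ is relevant to the canonical order on $\mathfrak m$. In particular, if $\mathfrak m$ is distinguished then $\mathfrak m$ is of Speh type.
   Context: Segments of integers: $[a,b]=\{a,\dots,b\}$ with integers $a\le b$; $b([a,b])=a$, $e([a,b])=b$, $\nu[a,b]=[a+1,b+1]$; $[a,b]\prec[a',b']$ if $a<a'$, $b<b'$, $b\ge a'-1$. $\mathcal O_{\mathbb Z}$: finite multi-sets of segments (functions to $\mathbb Z_{\ge0}$ with finite support; $|\mathfrak m|$ is the total multiplicity; sums and pointwise minima are taken as functions; $\nu\mathfrak n$ applies $\nu$ to each segment). An ordering $\{\Delta_1,\dots,\Delta_k\}$ is standard if $\Delta_i\not\prec\Delta_j$ for $i<j$. A decomposition of $[a,b]$ is a tuple of nonempty segments $([a_1,b_1],\dots,[a_m,b_m])$ with $b_1=b$, $a_m=a$, $b_{i+1}=a_i-1$; trivial if $m=1$. A decomposition of an ordered multi-set $\{\Delta_1,\dots,\Delta_k\}$ is a choice of decomposition $(\Delta_{i,1},\dots,\Delta_{i,k_i})$ of each $\Delta_i$ (trivial if all are trivial); index set $\mathfrak I=\{(i,j)\}$ with lexicographic order $\prec$, and $(i,j)\ll(i',j')$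 iff $i<i'$. It is relevant to the ordering if there is an involution $\tau$ of $\mathfrak I$ with: $\tau(i,j+1)\ll\tau(i,j)$; $\tau(\iota)\ne\iota$ for all $\iota$; $\Delta_\iota=\nu\Delta_{\tau(\iota)}$ whenever $\iota\prec\tau(\iota)$. $\mathfrak m$ is distinguished if every standard ordering admits a relevant decomposition; of Speh type if $\mathfrak m=\mathfrak n+\nu\mathfrak n$ for some $\mathfrak n$. Canonical order: list all of $\mathfrak m[1]$, then all of $\mathfrak m[2]$, etc. Order $\mathfrak m[1]$ by nondecreasing beginnings and set $\mathfrak m[1]'=\mathfrak m[1]$. Given $\mathfrak m[i]'$, let $\mathfrak p=\min(\mathfrak m[i+1],\nu^{-1}\mathfrak m[i]')$ and $\mathfrak m[i+1]'=\mathfrak m[i+1]-\mathfrak p$; order $\mathfrak m[i+1]$ as the segments of $\mathfrak m[i+1]'$ in nondecreasing order of beginnings followed by the segments of $\mathfrak p$ in nonincreasing order of beginnings. *)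

theory Defs
  imports Main "HOL-Library.Multiset"
begin

text \<open>A segment [a,b] is represented by the pair (a,b) of integers with a \<le> b.\<close>
type_synonym seg = "int \<times> int"

definition is_seg :: "seg \<Rightarrow> bool" where
  "is_seg s \<longleftrightarrow> fst s \<le> snd s"

definition nu :: "seg \<Rightarrow> seg" where
  "nu s = (fst s + 1, snd s + 1)"

definition nu_inv :: "seg \<Rightarrow> seg" where
  "nu_inv s = (fst s - 1, snd s - 1)"

definition seg_prec :: "seg \<Rightarrow> seg \<Rightarrow> bool" where
  "seg_prec s t \<longleftrightarrow> fst s < fst t \<and> snd s < snd t \<and> snd s \<ge> fst t - 1"

definition in_OZ :: "seg multiset \<Rightarrow> bool" where
  "in_OZ m \<longleftrightarrow> (\<forall>s\<in>#m. is_seg s)"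

text \<open>An ordering of m is a list with multiset m; standard if no earlier segment precedes a later one.\<close>
definition standard_ordering :: "seg list \<Rightarrow> bool" where
  "standard_ordering xs \<longleftrightarrow> (\<forall>i j. i < j \<and> j < length xs \<longrightarrow> \<not> seg_prec (xs ! i) (xs ! j))"

definition is_seg_decomp :: "seg \<Rightarrow> seg list \<Rightarrow> bool" where
  "is_seg_decomp s ds \<longleftrightarrow> ds \<noteq> [] \<and> (\<forall>d\<in>set ds. is_seg d) \<and>
     snd (hd ds) = snd s \<and> fst (last ds) = fst s \<and>
     (\<forall>i. Suc i < length ds \<longrightarrow> snd (ds ! Suc i) = fst (ds ! i) - 1)"

definition is_decomp :: "seg list \<Rightarrow> seg list list \<Rightarrow> bool" where
  "is_decomp xs D \<longleftrightarrow> length D = length xs \<and> (\<forall>i < length xs. is_seg_decomp (xs ! i) (D ! i))"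

definition trivial_decomp :: "seg list list \<Rightarrow> bool" where
  "trivial_decomp D \<longleftrightarrow> (\<forall>i < length D. length (D ! i) = 1)"

definition decomp_index :: "seg list list \<Rightarrow> (nat \<times> nat) set" where
  "decomp_index D = {(i, j). i < length D \<and> j < length (D ! i)}"

definition lex_less :: "nat \<times> nat \<Rightarrow> nat \<times> nat \<Rightarrow> bool" where
  "lex_less p q \<longleftrightarrow> fst p < fst q \<or> (fst p = fst q \<and> snd p < snd q)"

definition piece :: "seg list list \<Rightarrow> nat \<times> nat \<Rightarrow> seg" where
  "piece D p = D ! fst p ! snd p"

definition relevant :: "seg list list \<Rightarrow> bool" where
  "relevant D \<longleftrightarrow> (\<exists>\<tau>.
     (\<forall>p\<in>decomp_index D. \<tau> p \<in> decomp_index D \<and> \<tau> (\<tau> p) = p \<and> \<tau> p \<noteq> p) \<and>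
     (\<forall>i j. (i, Suc j) \<in> decomp_index D \<longrightarrow> fst (\<tau> (i, Suc j)) < fst (\<tau> (i, j))) \<and>
     (\<forall>p\<in>decomp_index D. lex_less p (\<tau> p) \<longrightarrow> piece D p = nu (piece D (\<tau> p))))"

definition distinguished :: "seg multiset \<Rightarrow> bool" where
  "distinguished m \<longleftrightarrow> (\<forall>xs. mset xs = m \<and> standard_ordering xs \<longrightarrow> (\<exists>D. is_decomp xs D \<and> relevant D))"

definition speh_type :: "seg multiset \<Rightarrow> bool" where
  "speh_type m \<longleftrightarrow> (\<exists>n. in_OZ n \<and> m = n + image_mset nu n)"

definition block :: "seg multiset \<Rightarrow> int \<Rightarrow> seg multiset" where
  "block m c = filter_mset (\<lambda>s. snd s = c) m"

definition asc_list :: "int \<Rightarrow> seg multiset \<Rightarrow> seg list" where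
  "asc_list c r = map (\<lambda>a. (a, c)) (sorted_list_of_multiset (image_mset fst r))"

text \<open>Canonical order: prev is m[i]', cs the remaining ends in decreasing order.\<close>
fun canon_aux :: "seg multiset \<Rightarrow> seg multiset \<Rightarrow> int list \<Rightarrow> seg list" where
  "canon_aux m prev [] = []"
| "canon_aux m prev (c # cs) =
     (let blk = block m c;
          p = blk \<inter># image_mset nu_inv prev;
          r = blk - p
      in asc_list c r @ rev (asc_list c p) @ canon_aux m r cs)"

definition ends_desc :: "seg multiset \<Rightarrow> int list" where
  "ends_desc m = rev (sorted_list_of_set (snd ` set_mset m))"

definition canonical_order :: "seg multiset \<Rightarrow> seg list" where
  "canonical_order m = canon_aux m {#} (ends_desc m)"

end

theory Submission
  imports Defs
begin

text \<open>Let \<open>c\<close> be the largest end of a segment of \<open>m\<close>. In a relevant decomposition of the canonical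
  order, the first segment ending at \<open>c\<close> is forced to be undivided and paired with an undivided
  segment ending at \<open>c - 1\<close>, namely its shift \<open>\<nu>\<^sup>-\<^sup>1\<close>; if two segments end at \<open>c\<close>, both are paired
  in this way with the two segments ending at \<open>c - 1\<close>. As blocks have at most two segments this is a
  finite case analysis, and the alternative pairings are excluded by the canonical listing (top
  block by increasing beginnings, paired part of the next block last and decreasing). Removing
  the first pair leaves the canonical order of a smaller multiset together with a relevant
  decomposition of it, so induction on the size shows that the decomposition is trivial and that
  \<open>m = n + \<nu> n\<close>. A distinguished \<open>m\<close> has such a relevant decomposition because the canonical order
  is standard.\<close>

section \<open>Decompositions of a segment\<close>

lemma seg_decomp_length_pos: "is_seg_decomp s ds \<Longrightarrow> 0 < length ds"
  by (simp add: is_seg_decomp_def)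

lemma seg_decomp_piece_is_seg: "is_seg_decomp s ds \<Longrightarrow> j < length ds \<Longrightarrow> fst (ds!j) \<le> snd (ds!j)"
  by (auto simp: is_seg_decomp_def is_seg_def)

lemma seg_decomp_first_end: "is_seg_decomp s ds \<Longrightarrow> snd (ds!0) = snd s"
  by (auto simp: is_seg_decomp_def hd_conv_nth)

lemma seg_decomp_last_start: "is_seg_decomp s ds \<Longrightarrow> fst (ds ! (length ds - 1)) = fst s"
  by (auto simp: is_seg_decomp_def last_conv_nth)

lemma seg_decomp_adjacent: "is_seg_decomp s ds \<Longrightarrow> Suc j < length ds \<Longrightarrow> snd (ds ! Suc j) = fst (ds ! j) - 1"
  by (auto simp: is_seg_decomp_def)

lemma seg_decomp_end_less_start:
  assumes "is_seg_decomp s ds" "j < j'" "j' < length ds"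
  shows "snd (ds!j') < fst (ds!j)"
  using assms(2,3)
proof (induction j')
  case (Suc k)
  have "snd (ds ! Suc k) = fst (ds ! k) - 1"
    using seg_decomp_adjacent[OF assms(1)] Suc.prems by simp
  moreover have "j < k \<Longrightarrow> snd (ds!k) < fst (ds!j)" "fst (ds!k) \<le> snd (ds!k)"
    using Suc seg_decomp_piece_is_seg[OF assms(1)] by auto
  ultimately show ?case using Suc.prems by (cases "j = k") auto
qed simp

lemma seg_decomp_end_le:
  assumes "is_seg_decomp s ds" "j < length ds"
  shows "snd (ds!j) \<le> snd s"
  using seg_decomp_end_less_start[OF assms(1), of 0 j] seg_decomp_piece_is_seg[OF assms(1), of 0]
    seg_decomp_first_end[OF assms(1)] seg_decomp_length_pos[OF assms(1)] assms(2)
  by (cases j) auto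

lemma seg_decomp_end_eq_imp_first:
  assumes "is_seg_decomp s ds" "j < length ds" "snd (ds!j) = snd s"
  shows "j = 0"
  using seg_decomp_end_less_start[OF assms(1), of 0 j] seg_decomp_piece_is_seg[OF assms(1), of 0]
    seg_decomp_first_end[OF assms(1)] seg_decomp_length_pos[OF assms(1)] assms(2,3)
  by (cases j) auto

lemma seg_decomp_start_ge:
  assumes "is_seg_decomp s ds" "j < length ds"
  shows "fst s \<le> fst (ds!j)"
  using seg_decomp_end_less_start[OF assms(1), of j "length ds - 1"]
    seg_decomp_piece_is_seg[OF assms(1), of "length ds - 1"] seg_decomp_last_start[OF assms(1)] assms(2)
  by (cases "j = length ds - 1") force+

lemma seg_decomp_single: "is_seg_decomp s ds \<Longrightarrow> length ds = 1 \<Longrightarrow> ds = [s]"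
  by (cases ds; cases s) (auto simp: is_seg_decomp_def)

section \<open>Relevant decompositions\<close>

lemma relevantE:
  assumes "relevant D"
  obtains \<tau> where
    "\<forall>p\<in>decomp_index D. \<tau> p \<in> decomp_index D \<and> \<tau> (\<tau> p) = p \<and> \<tau> p \<noteq> p"
    "\<forall>i j. (i, Suc j) \<in> decomp_index D \<longrightarrow> fst (\<tau> (i, Suc j)) < fst (\<tau> (i, j))"
    "\<forall>p\<in>decomp_index D. lex_less p (\<tau> p) \<longrightarrow> piece D p = nu (piece D (\<tau> p))"
  using assms unfolding relevant_def by blast

locale relevant_decomp =
  fixes xs :: "seg list" and D :: "seg list list" and \<tau> :: "nat \<times> nat \<Rightarrow> nat \<times> nat"
  assumes decomp: "is_decomp xs D"
    and involution: "\<forall>p\<in>decomp_index D. \<tau> p \<in> decomp_index D \<and> \<tau> (\<tau> p) = p \<and> \<tau> p \<noteq> p"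
    and row_decreasing: "\<forall>i j. (i, Suc j) \<in> decomp_index D \<longrightarrow> fst (\<tau> (i, Suc j)) < fst (\<tau> (i, j))"
    and shift: "\<forall>p\<in>decomp_index D. lex_less p (\<tau> p) \<longrightarrow> piece D p = nu (piece D (\<tau> p))"
begin

lemma relevant_D: "relevant D"
  unfolding relevant_def using involution row_decreasing shift by blast

lemma length_D: "length D = length xs"
  using decomp by (simp add: is_decomp_def)

lemma index_iff: "(i, j) \<in> decomp_index D \<longleftrightarrow> i < length xs \<and> j < length (D!i)"
  using length_D by (simp add: decomp_index_def)

lemma row_decomp: "i < length xs \<Longrightarrow> is_seg_decomp (xs!i) (D!i)"
  using decomp by (simp add: is_decomp_def)

lemma row_nonempty: "i < length xs \<Longrightarrow> (i, 0) \<in> decomp_index D"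
  using seg_decomp_length_pos[OF row_decomp] by (simp add: index_iff)

lemma second_piece_index:
  assumes "i < length xs" "length (D!i) \<noteq> 1"
  shows "(i, 1) \<in> decomp_index D"
proof -
  have "0 < length (D!i)" using seg_decomp_length_pos[OF row_decomp[OF assms(1)]] .
  then show ?thesis using assms unfolding index_iff by linarith
qed

lemma partner_index: "p \<in> decomp_index D \<Longrightarrow> \<tau> p \<in> decomp_index D"
  using involution by blast

lemma partner_partner: "p \<in> decomp_index D \<Longrightarrow> \<tau> (\<tau> p) = p"
  using involution by blast

lemma partner_ne: "p \<in> decomp_index D \<Longrightarrow> \<tau> p \<noteq> p"
  using involution by blast

lemma partner_bounds: "(i, j) \<in> decomp_index D \<Longrightarrow> \<tau> (i, j) = (q, l) \<Longrightarrow> q < length xs \<and> l < length (D!q)"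
  using partner_index[of "(i, j)"] by (simp add: index_iff)

lemma piece_is_seg: "(i, j) \<in> decomp_index D \<Longrightarrow> fst (D!i!j) \<le> snd (D!i!j)"
  using seg_decomp_piece_is_seg[OF row_decomp] by (simp add: index_iff)

lemma partner_rows_decreasing:
  assumes "(i, j') \<in> decomp_index D" "j < j'"
  shows "fst (\<tau> (i, j')) < fst (\<tau> (i, j))"
  using assms
proof (induction j')
  case (Suc k)
  have "fst (\<tau> (i, Suc k)) < fst (\<tau> (i, k))"
    using row_decreasing Suc.prems by blast
  moreover have "j < k \<Longrightarrow> fst (\<tau> (i, k)) < fst (\<tau> (i, j))"
    using Suc by (auto simp: index_iff)
  ultimately show ?case using Suc.prems by (cases "j = k") auto
qed simp

lemma partner_other_row:
  assumes p: "p \<in> decomp_index D"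
  shows "fst (\<tau> p) \<noteq> fst p"
proof
  assume same_row: "fst (\<tau> p) = fst p"
  obtain i j j' where ij: "p = (i, j)" "\<tau> p = (i, j')"
    using same_row by (cases p; cases "\<tau> p") auto
  have "j \<noteq> j'" "\<tau> (i, j') = (i, j)"
    using involution p ij by auto
  moreover have "(i, j) \<in> decomp_index D" "(i, j') \<in> decomp_index D"
    using p ij partner_index by (auto, metis)
  ultimately show False
    using partner_rows_decreasing[of i j j'] partner_rows_decreasing[of i j' j] ij
    by (cases "j < j'") auto
qed

lemma piece_shift:
  assumes "(i, j) \<in> decomp_index D" "\<tau> (i, j) = (q, l)" "i < q"
  shows "D!i!j = nu (D!q!l)"
  using shift assms by (auto simp: lex_less_def piece_def)

lemma partner_in_first_row_imp_last:
  assumes "(i, j) \<in> decomp_index D" "fst (\<tau> (i, j)) = 0"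
  shows "length (D!i) = Suc j"
proof (rule ccontr)
  assume "length (D!i) \<noteq> Suc j"
  then have "(i, Suc j) \<in> decomp_index D" using assms(1) by (simp add: index_iff)
  then show False using row_decreasing assms(2) by fastforce
qed

lemma trivial_row: "i < length xs \<Longrightarrow> length (D!i) = 1 \<Longrightarrow> D!i!0 = xs!i"
  using seg_decomp_single[OF row_decomp] by fastforce

end

section \<open>The canonical order\<close>

lemma nu_fst [simp]: "fst (nu s) = fst s + 1" and nu_snd [simp]: "snd (nu s) = snd s + 1"
  by (simp_all add: nu_def)

lemma nu_inv_fst [simp]: "fst (nu_inv s) = fst s - 1" and nu_inv_snd [simp]: "snd (nu_inv s) = snd s - 1"
  by (simp_all add: nu_inv_def)

lemma nu_inv_nu [simp]: "nu_inv (nu s) = s" and nu_nu_inv [simp]: "nu (nu_inv s) = s"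
  by (simp_all add: nu_def nu_inv_def)

lemma in_block_end: "s \<in># block m c \<Longrightarrow> snd s = c"
  by (simp add: block_def)

lemma block_nonempty_iff: "block m x \<noteq> {#} \<longleftrightarrow> x \<in> snd ` set_mset m"
  by (force simp: block_def filter_mset_eq_conv)

lemma block_diff: "block (m - n) x = block m x - block n x"
  by (simp add: block_def)

lemma set_asc_list_end: "s \<in> set (asc_list c r) \<Longrightarrow> snd s = c"
  by (auto simp: asc_list_def)

lemma length_asc_list: "length (asc_list c r) = size r"
  by (simp add: asc_list_def flip: size_mset)

lemma mset_asc_list:
  assumes "\<And>s. s \<in># r \<Longrightarrow> snd s = c"
  shows "mset (asc_list c r) = r"
proof -
  have "mset (asc_list c r) = image_mset (\<lambda>s. (fst s, c)) r"
    by (simp add: asc_list_def image_mset.compositionality comp_def)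
  also have "\<dots> = image_mset id r"
    using assms by (intro image_mset_cong) auto
  finally show ?thesis by simp
qed

lemma sorted_asc_list: "sorted (map fst (asc_list c r))"
  by (simp add: asc_list_def comp_def)

lemma asc_list_empty [simp]: "asc_list c {#} = []"
  by (simp add: asc_list_def)

lemma asc_list_single: "snd s = c \<Longrightarrow> asc_list c {#s#} = [s]"
  by (cases s) (simp add: asc_list_def)

lemma canon_aux_ends: "s \<in> set (canon_aux m prev cs) \<Longrightarrow> snd s \<in> set cs"
  by (induction cs arbitrary: prev) (auto simp: Let_def dest: set_asc_list_end)

lemma canon_aux_cong:
  "(\<And>c. c \<in> set cs \<Longrightarrow> block m c = block m' c) \<Longrightarrow> canon_aux m prev cs = canon_aux m' prev cs"
  by (induction cs arbitrary: prev) (auto simp: Let_def)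

lemma canon_aux_prev_irrelevant:
  assumes "\<And>s. s \<in># prev \<Longrightarrow> snd s \<noteq> c + 1"
  shows "canon_aux m prev (c # cs) = canon_aux m {#} (c # cs)"
proof -
  have "block m c \<inter># image_mset nu_inv prev = {#}"
    using assms by (force simp: set_mset_inter dest: in_block_end simp flip: set_mset_eq_empty_iff)
  then show ?thesis by (simp add: Let_def del: diff_intersect_left_idem)
qed

lemma mset_canon_aux:
  "distinct cs \<Longrightarrow> mset (canon_aux m prev cs) = filter_mset (\<lambda>s. snd s \<in> set cs) m"
proof (induction cs arbitrary: prev)
  case (Cons c cs)
  define p where "p = block m c \<inter># image_mset nu_inv prev"
  have p: "p \<subseteq># block m c" by (simp add: p_def)
  have "mset (asc_list c (block m c - p)) = block m c - p" "mset (asc_list c p) = p"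
    using p by (auto intro!: mset_asc_list dest: in_block_end in_diffD mset_subset_eqD)
  then have "mset (canon_aux m prev (c # cs)) = block m c + filter_mset (\<lambda>s. snd s \<in> set cs) m"
    using Cons p by (simp add: Let_def flip: p_def del: diff_intersect_left_idem)
  also have "\<dots> = filter_mset (\<lambda>s. snd s \<in> set (c # cs)) m"
    using Cons.prems by (auto simp: block_def intro!: multiset_eqI)
  finally show ?case .
qed simp

lemma ends_desc: "sorted_wrt (>) (ends_desc m)" "set (ends_desc m) = snd ` set_mset m"
  by (simp_all add: ends_desc_def sorted_wrt_rev)

lemma mset_canonical_order: "mset (canonical_order m) = m"
proof -
  have "distinct (ends_desc m)"
    by (simp add: ends_desc_def)
  then show ?thesis
    unfolding canonical_order_def by (simp add: mset_canon_aux ends_desc filter_mset_eq_conv)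
qed

lemma canon_aux_ends_decreasing:
  "sorted_wrt (>) cs \<Longrightarrow> sorted_wrt (\<lambda>s t. snd t \<le> snd s) (canon_aux m prev cs)"
proof (induction cs arbitrary: prev)
  case (Cons c cs)
  define p where "p = block m c \<inter># image_mset nu_inv prev"
  define hd_block where "hd_block = asc_list c (block m c - p) @ rev (asc_list c p)"
  have "\<forall>s\<in>set hd_block. snd s = c"
    by (auto simp: hd_block_def dest: set_asc_list_end)
  moreover have "\<forall>t\<in>set (canon_aux m (block m c - p) cs). snd t < c"
    using Cons.prems by (auto dest: canon_aux_ends)
  moreover have "sorted_wrt (\<lambda>s t. snd t \<le> snd s) hd_block" if "\<forall>s\<in>set hd_block. snd s = c"
    using that by (simp add: sorted_wrt_iff_nth_less)
  ultimately show ?case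
    using Cons by (fastforce simp: Let_def sorted_wrt_append hd_block_def p_def simp del: diff_intersect_left_idem)
qed simp

lemma standard_canonical_order: "standard_ordering (canonical_order m)"
proof -
  have "sorted_wrt (\<lambda>s t. snd t \<le> snd s) (canonical_order m)"
    unfolding canonical_order_def using canon_aux_ends_decreasing ends_desc by blast
  then show ?thesis
    unfolding standard_ordering_def seg_prec_def sorted_wrt_iff_nth_less by (meson not_le)
qed

lemma canonical_order_eq_canon_aux:
  assumes "sorted_wrt (>) L" "set L = snd ` set_mset m"
  shows "canonical_order m = canon_aux m {#} L"
proof -
  have "sorted_list_of_set (snd ` set_mset m) = rev L"
    using assms by (intro strict_sorted_equal) (auto simp: sorted_wrt_rev)
  then show ?thesis by (simp add: canonical_order_def ends_desc_def)
qed

text \<open>With \<open>c\<close> the top end of \<open>m\<close>, these are the paper's \<open>p = min (m[2], \<nu>\<^sup>-\<^sup>1 m[1])\<close> and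
  \<open>m[2]' = m[2] - p\<close> (both empty if \<open>c - 1\<close> is not an end).\<close>
definition paired_below :: "seg multiset \<Rightarrow> int \<Rightarrow> seg multiset" where
  "paired_below m c = block m (c - 1) \<inter># image_mset nu_inv (block m c)"

definition unpaired_below :: "seg multiset \<Rightarrow> int \<Rightarrow> seg multiset" where
  "unpaired_below m c = block m (c - 1) - paired_below m c"

lemma paired_below_subset: "paired_below m c \<subseteq># block m (c - 1)"
  by (simp add: paired_below_def)

lemma canonical_order_top:
  assumes "c \<in> snd ` set_mset m" and top: "\<And>x. x \<in> snd ` set_mset m \<Longrightarrow> x \<le> c"
    and cs: "cs = rev (sorted_list_of_set {x \<in> snd ` set_mset m. x < c - 1})"
  shows "canonical_order m = asc_list c (block m c) @ asc_list (c - 1) (unpaired_below m c)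
      @ rev (asc_list (c - 1) (paired_below m c)) @ canon_aux m (unpaired_below m c) cs"
proof -
  have cs_sorted: "sorted_wrt (>) cs" and set_cs: "set cs = {x \<in> snd ` set_mset m. x < c - 1}"
    by (simp_all add: cs sorted_wrt_rev)
  show ?thesis
  proof (cases "block m (c - 1) = {#}")
    case True
    then have "c - 1 \<notin> snd ` set_mset m" using block_nonempty_iff by blast
    then have "set (c # cs) = snd ` set_mset m"
      using assms(1) top set_cs by (force simp: le_less)
    then have "canonical_order m = canon_aux m {#} (c # cs)"
      using cs_sorted set_cs by (intro canonical_order_eq_canon_aux) auto
    also have "canon_aux m (block m c) cs = canon_aux m {#} cs"
    proof (cases cs)
      case (Cons h t)
      then have "h < c - 1" using set_cs by auto
      then show ?thesis
        unfolding Cons by (intro canon_aux_prev_irrelevant) (auto dest: in_block_end)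
    qed simp
    ultimately show ?thesis
      using True by (simp add: Let_def paired_below_def unpaired_below_def)
  next
    case False
    then have "c - 1 \<in> snd ` set_mset m" using block_nonempty_iff by blast
    then have "set (c # (c - 1) # cs) = snd ` set_mset m"
      using assms(1) top set_cs by (force simp: le_less)
    then have "canonical_order m = canon_aux m {#} (c # (c - 1) # cs)"
      using cs_sorted set_cs by (intro canonical_order_eq_canon_aux) auto
    then show ?thesis by (simp add: Let_def paired_below_def unpaired_below_def)
  qed
qed

section \<open>The two top blocks of the canonical order\<close>

locale canonical_top = relevant_decomp xs D \<tau> for xs D \<tau> +
  fixes m :: "seg multiset" and c :: int
  assumes blocks_le_2: "\<And>x. size (block m x) \<le> 2"
    and xs_canonical: "xs = canonical_order m"
    and top_end: "c \<in> snd ` set_mset m"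
    and top_max: "\<And>x. x \<in> snd ` set_mset m \<Longrightarrow> x \<le> c"
begin

definition "lower_ends = rev (sorted_list_of_set {x \<in> snd ` set_mset m. x < c - 1})"
definition "A = asc_list c (block m c)"
definition "M = asc_list (c - 1) (unpaired_below m c) @ rev (asc_list (c - 1) (paired_below m c))"
definition "T = canon_aux m (unpaired_below m c) lower_ends"
definition "k1 = size (block m c)"
definition "k2 = size (block m (c - 1))"

lemma xs_split: "xs = A @ M @ T"
  using canonical_order_top[OF top_end top_max lower_ends_def]
  by (simp add: xs_canonical A_def M_def T_def)

lemma length_A: "length A = k1"
  by (simp add: A_def k1_def length_asc_list)

lemma length_M: "length M = k2"
  using size_Diff_submset[OF paired_below_subset] size_mset_mono[OF paired_below_subset]
  by (simp add: M_def k2_def length_asc_list unpaired_below_def)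

lemma k1_bounds: "1 \<le> k1" "k1 \<le> 2"
  using top_end blocks_le_2[of c]
  by (auto simp: k1_def Suc_le_eq nonempty_has_size simp flip: block_nonempty_iff)

lemma k2_le: "k2 \<le> 2"
  using blocks_le_2 by (simp add: k2_def)

lemma length_ge: "k1 + k2 \<le> length xs"
  using xs_split length_A length_M by simp

lemma nth_top: "i < k1 \<Longrightarrow> xs!i = A!i"
  using xs_split length_A by (simp add: nth_append)

lemma nth_middle:
  assumes "k1 \<le> i" "i < k1 + k2"
  shows "xs!i = M!(i - k1)"
proof -
  have "xs!i = (M @ T)!(i - k1)" using xs_split length_A assms by (simp add: nth_append)
  moreover have "i - k1 < length M" using length_M assms by simp
  ultimately show ?thesis by (simp add: nth_append)
qed

lemma end_top: "i < k1 \<Longrightarrow> snd (xs!i) = c"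
  using nth_top length_A nth_mem[of i A] by (metis A_def set_asc_list_end)

lemma end_middle: "k1 \<le> i \<Longrightarrow> i < k1 + k2 \<Longrightarrow> snd (xs!i) = c - 1"
  using nth_middle length_M nth_mem[of "i - k1" M]
  by (force simp: M_def dest: set_asc_list_end)

lemma end_T: "s \<in> set T \<Longrightarrow> snd s < c - 1"
  by (auto simp: T_def lower_ends_def dest: canon_aux_ends)

lemma end_lower: "k1 + k2 \<le> i \<Longrightarrow> i < length xs \<Longrightarrow> snd (xs!i) < c - 1"
  using xs_split length_A length_M end_T nth_mem[of "i - k1 - k2" T] by (simp add: nth_append)

lemma mset_A: "mset A = block m c"
  by (simp add: A_def mset_asc_list in_block_end)

lemma mset_M: "mset M = block m (c - 1)"
proof -
  have "\<And>s. s \<in># unpaired_below m c \<Longrightarrow> snd s = c - 1" "\<And>s. s \<in># paired_below m c \<Longrightarrow> snd s = c - 1"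
    using paired_below_subset
    by (auto simp: unpaired_below_def dest!: in_diffD mset_subset_eqD in_block_end)
  then show ?thesis
    using paired_below_subset by (simp add: M_def mset_asc_list unpaired_below_def)
qed

lemma A_single: "k1 = 1 \<Longrightarrow> A = [xs!0]"
  using length_A nth_top[of 0] by (cases A) auto

lemma A_double: "k1 = 2 \<Longrightarrow> A = [xs!0, xs!1]"
  using length_A nth_top[of 0] nth_top[of 1] by (cases A; cases "tl A") auto

lemma M_single: "k2 = 1 \<Longrightarrow> M = [xs!k1]"
  using length_M nth_middle[of k1] by (cases M) auto

lemma M_double: "k2 = 2 \<Longrightarrow> M = [xs!k1, xs!Suc k1]"
  using length_M nth_middle[of k1] nth_middle[of "Suc k1"] by (cases M; cases "tl M") auto

text \<open>The lemmas below are the only places where the order of the canonical listing enters: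
  the top block is listed by increasing beginnings, and the part of the second block paired with
  the top block is listed last, by decreasing beginnings.\<close>
lemma top_sorted: "k1 = 2 \<Longrightarrow> fst (xs!0) \<le> fst (xs!1)"
  using sorted_asc_list[of c "block m c"] A_double by (simp add: A_def)

lemma paired_listed_last:
  assumes "k1 = 1" "k2 = 2" "xs!1 = nu_inv (xs!0)"
  shows "xs!2 = xs!1"
proof -
  have M: "M = [xs!1, xs!2]"
    using M_double[OF assms(2)] assms(1) by (simp add: numeral_2_eq_2)
  have blocks: "block m c = {#xs!0#}" "block m (c - 1) = {#xs!1, xs!2#}"
    using mset_A mset_M A_single[OF assms(1)] M by simp_all
  then have paired: "paired_below m c = {#xs!1#}"
    using assms(3) by (simp add: paired_below_def)
  then have unpaired: "unpaired_below m c = {#xs!2#}"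
    using blocks by (simp add: unpaired_below_def)
  have ends: "snd (xs!1) = c - 1" "snd (xs!2) = c - 1"
    using end_middle[of 1] end_middle[of 2] assms(1,2) by simp_all
  have "M = [xs!2, xs!1]"
    unfolding M_def paired unpaired asc_list_single[OF ends(1)] asc_list_single[OF ends(2)] by simp
  then have "M!0 = xs!2" by simp
  moreover have "M!0 = xs!1" using M by simp
  ultimately show ?thesis by simp
qed

lemma paired_listed_descending:
  assumes "k1 = 2" "k2 = 2" "xs!2 = nu_inv (xs!0)" "xs!3 = nu_inv (xs!1)"
  shows "fst (xs!3) \<le> fst (xs!2)"
proof -
  have M: "M = [xs!2, xs!3]"
    using M_double[OF assms(2)] assms(1) by (simp add: numeral_3_eq_3)
  have "block m c = {#xs!0, xs!1#}" "block m (c - 1) = {#xs!2, xs!3#}"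
    using mset_A mset_M A_double[OF assms(1)] M by simp_all
  then have "image_mset nu_inv (block m c) = block m (c - 1)"
    using assms(3,4) by simp
  then have "M = rev (asc_list (c - 1) (block m (c - 1)))"
    by (simp add: M_def paired_below_def unpaired_below_def)
  then have "asc_list (c - 1) (block m (c - 1)) = rev M" by simp
  then have "asc_list (c - 1) (block m (c - 1)) = [xs!3, xs!2]" using M by simp
  then show ?thesis
    using sorted_asc_list[of "c - 1" "block m (c - 1)"] by simp
qed

text \<open>A top first piece ends at \<open>c\<close>, so a partner in a later row ends at \<open>c - 1\<close>; as no piece of a
  row ends above the row, that partner is the first piece of a second-block row.\<close>
lemma top_partner_in_middle:
  assumes "i < k1" "\<tau> (i, 0) = (q, l)" "k1 \<le> q"
  shows "l = 0 \<and> q < k1 + k2"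
proof -
  have i: "i < length xs" using assms(1) length_ge by linarith
  have pi: "(i, 0) \<in> decomp_index D" using row_nonempty[OF i] .
  have ql: "q < length xs" "l < length (D!q)" using partner_bounds[OF pi assms(2)] by auto
  have "snd (D!i!0) = c"
    using seg_decomp_first_end[OF row_decomp[OF i]] end_top[OF assms(1)] by simp
  then have piece_end: "snd (D!q!l) = c - 1" using piece_shift[OF pi assms(2)] assms by simp
  have le: "snd (D!q!l) \<le> snd (xs!q)" using seg_decomp_end_le[OF row_decomp[OF ql(1)] ql(2)] .
  have "q < k1 + k2"
    using end_lower[of q] ql(1) le piece_end by (cases "q < k1 + k2") auto
  moreover have "l = 0"
    using seg_decomp_end_eq_imp_first[OF row_decomp[OF ql(1)] ql(2)] end_middle[of q] le
      piece_end assms(3) calculation by simp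
  ultimately show ?thesis by simp
qed

text \<open>A split row 0 would pair its second piece with row 1, making \<open>xs!1\<close> the shift of \<open>xs!0\<close>
  while \<open>xs!2\<close> starts after \<open>xs!1\<close>; but the paired segment is listed last in its block.\<close>
lemma single_top_row_trivial:
  assumes k1: "k1 = 1" and t0: "\<tau> (0, 0) = (q, 0)" and q: "k1 \<le> q" "q < k1 + k2"
    and lq: "length (D!q) = 1"
  shows "length (D!0) = 1"
proof (rule ccontr)
  assume "length (D!0) \<noteq> 1"
  have x0: "0 < length xs" using length_ge k1 by linarith
  have p0: "(0, 0) \<in> decomp_index D" using row_nonempty[OF x0] .
  have p1: "(0, 1) \<in> decomp_index D" using second_piece_index[OF x0] \<open>length (D!0) \<noteq> 1\<close> .
  then have "1 < length (D!0)" by (simp add: index_iff)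
  obtain q' l' where t1: "\<tau> (0, 1) = (q', l')" by fastforce
  have "q' < q" using partner_rows_decreasing[OF p1, of 0] t1 t0 by simp
  moreover have "q' \<noteq> 0" using partner_other_row[OF p1] t1 by simp
  ultimately have qq: "q' = 1" "q = 2" "k2 = 2" using q k1 k2_le by auto
  have len0: "length (D!0) = 2"
  proof (rule ccontr)
    assume "length (D!0) \<noteq> 2"
    then have p2: "(0, 2) \<in> decomp_index D" using \<open>1 < length (D!0)\<close> x0 by (simp add: index_iff)
    have "fst (\<tau> (0, 2)) < fst (\<tau> (0, 1))" using partner_rows_decreasing[OF p2, of 1] by simp
    then show False using partner_other_row[OF p2] t1 qq by simp
  qed
  have u1: "D!0!1 = nu (D!1!l')" using piece_shift[OF p1 t1] qq by simp
  have "(1, l') \<in> decomp_index D" "\<tau> (1, l') = (0, 1)"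
    using partner_index[OF p1] partner_partner[OF p1] t1 qq by auto
  then have len1: "length (D!1) = Suc l'" using partner_in_first_row_imp_last by simp
  have x2: "2 < length xs" using length_ge k1 qq by linarith
  have "fst (xs!0) = fst (D!0!1)" "fst (xs!1) = fst (D!1!l')"
    using seg_decomp_last_start[OF row_decomp, of 0] seg_decomp_last_start[OF row_decomp, of 1]
      len0 len1 x0 x2 by simp_all
  moreover have "snd (xs!0) = c" "snd (xs!1) = c - 1" using end_top end_middle k1 qq by auto
  ultimately have "xs!1 = nu_inv (xs!0)" using u1 by (simp add: prod_eq_iff)
  then have "xs!2 = xs!1" using paired_listed_last k1 qq by simp
  moreover have "fst (xs!1) < fst (xs!2)"
  proof -
    have "snd (D!0!1) < fst (D!0!0)"
      using seg_decomp_end_less_start[OF row_decomp[OF x0], of 0 1] len0 by simp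
    moreover have "xs!2 = D!2!0" "D!0!0 = nu (D!2!0)"
      using trivial_row[OF x2] lq piece_shift[OF p0 t0] qq by simp_all
    ultimately show ?thesis
      using \<open>fst (xs!1) = fst (D!1!l')\<close> u1 piece_is_seg[OF p1] by simp
  qed
  ultimately show False by simp
qed

lemma single_top_pairing:
  assumes k1: "k1 = 1"
  obtains q where "k1 \<le> q" "q < k1 + k2" "\<tau> (0, 0) = (q, 0)"
    "length (D!0) = 1" "length (D!q) = 1" "xs!q = nu_inv (xs!0)"
proof -
  have x0: "0 < length xs" using length_ge k1 by linarith
  have p0: "(0, 0) \<in> decomp_index D" using row_nonempty[OF x0] .
  obtain q l where ql: "\<tau> (0, 0) = (q, l)" by fastforce
  have "q \<noteq> 0" using partner_other_row[OF p0] ql by simp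
  then have q: "l = 0" "k1 \<le> q" "q < k1 + k2" using top_partner_in_middle[of 0 q l] k1 ql by auto
  have t0: "\<tau> (0, 0) = (q, 0)" using ql q by simp
  have "(q, 0) \<in> decomp_index D" "\<tau> (q, 0) = (0, 0)"
    using partner_index[OF p0] partner_partner[OF p0] t0 by auto
  then have lq: "length (D!q) = 1" using partner_in_first_row_imp_last by simp
  have l0: "length (D!0) = 1" using single_top_row_trivial[OF k1 t0 q(2,3) lq] .
  have xq: "q < length xs" using q length_ge by linarith
  have "xs!0 = nu (xs!q)"
    using trivial_row[OF x0 l0] trivial_row[OF xq lq] piece_shift[OF p0 t0] \<open>q \<noteq> 0\<close> by simp
  then have "xs!q = nu_inv (xs!0)" by simp
  then show ?thesis using that q(2,3) t0 l0 lq by blast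
qed

text \<open>With two top rows, no piece of one top row is paired with the other: as the top block is
  listed by increasing beginnings, such a pairing would make row 0 start after row 1.\<close>
lemma double_top_partner_rows:
  assumes k1: "k1 = 2" and p: "(i, j) \<in> decomp_index D" "i < 2"
  shows "2 \<le> fst (\<tau> (i, j))"
proof -
  have x: "0 < length xs" "1 < length xs" using length_ge k1 by linarith+
  have not_paired: False if pj: "(0, j') \<in> decomp_index D" "\<tau> (0, j') = (1, l)" for j' l
  proof -
    have "(1, l) \<in> decomp_index D" "\<tau> (1, l) = (0, j')"
      using partner_index[OF pj(1)] partner_partner[OF pj(1)] pj(2) by auto
    have "length (D!0) = Suc j'"
    proof (rule ccontr)
      assume "length (D!0) \<noteq> Suc j'"
      then have ps: "(0, Suc j') \<in> decomp_index D" using pj by (simp add: index_iff)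
      then show False using row_decreasing pj(2) partner_other_row[OF ps] by fastforce
    qed
    then have "fst (xs!0) = fst (D!0!j')"
      using seg_decomp_last_start[OF row_decomp[OF x(1)]] by simp
    moreover have "fst (xs!1) \<le> fst (D!1!l)"
      using seg_decomp_start_ge[OF row_decomp[OF x(2)]] partner_bounds[OF pj] by simp
    ultimately show False
      using piece_shift[OF pj] top_sorted[OF k1] by simp
  qed
  have "fst (\<tau> (i, j)) \<noteq> i" using partner_other_row[OF p(1)] by simp
  moreover have "fst (\<tau> (i, j)) \<noteq> 1 - i"
  proof
    assume other: "fst (\<tau> (i, j)) = 1 - i"
    obtain l where tl: "\<tau> (i, j) = (1 - i, l)" using other by (metis prod.collapse)
    show False
    proof (cases "i = 0")
      case True then show False using not_paired p tl by simp
    next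
      case False
      then have "(0, l) \<in> decomp_index D" "\<tau> (0, l) = (1, j)"
        using partner_index[OF p(1)] partner_partner[OF p(1)] tl p(2) by auto
      then show False using not_paired by blast
    qed
  qed
  ultimately show ?thesis using p(2) by linarith
qed

lemma double_top_partners:
  assumes k1: "k1 = 2"
  obtains q0 q1 where "\<tau> (0, 0) = (q0, 0)" "\<tau> (1, 0) = (q1, 0)" "k2 = 2"
    "q0 = 2 \<and> q1 = 3 \<or> q0 = 3 \<and> q1 = 2"
proof -
  have "0 < length xs" "1 < length xs" using length_ge k1 by linarith+
  then have p: "(0, 0) \<in> decomp_index D" "(1, 0) \<in> decomp_index D"
    using row_nonempty by simp_all
  obtain q0 l0 q1 l1 where t: "\<tau> (0, 0) = (q0, l0)" "\<tau> (1, 0) = (q1, l1)" by fastforce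
  have ge: "2 \<le> q0" "2 \<le> q1"
    using double_top_partner_rows[OF k1 p(1)] double_top_partner_rows[OF k1 p(2)] t by simp_all
  have mid: "l0 = 0" "q0 < k1 + k2" "l1 = 0" "q1 < k1 + k2"
    using top_partner_in_middle[of 0 q0 l0] top_partner_in_middle[of 1 q1 l1] k1 t ge by simp_all
  have "q0 \<noteq> q1"
  proof
    assume "q0 = q1"
    then have "\<tau> (0, 0) = \<tau> (1, 0)" using t mid by simp
    then have "(0::nat, 0::nat) = (1, 0)" using partner_partner[OF p(1)] partner_partner[OF p(2)] by metis
    then show False by simp
  qed
  then have "k2 = 2" "q0 = 2 \<and> q1 = 3 \<or> q0 = 3 \<and> q1 = 2"
    using mid ge k1 k2_le by linarith+
  then show ?thesis using that t mid by simp
qed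

lemma double_top_row0_split_pattern:
  assumes k1: "k1 = 2" and t0: "\<tau> (0, 0) = (q0, 0)" and t1: "\<tau> (1, 0) = (q1, 0)"
    and k2: "k2 = 2" and qs: "q0 = 2 \<and> q1 = 3 \<or> q0 = 3 \<and> q1 = 2"
    and split: "length (D!0) \<noteq> 1"
  shows "q0 = 3" "q1 = 2" "\<tau> (0, 1) = (2, 1)"
    "length (D!0) = 2" "length (D!1) = 1" "length (D!2) = 2" "length (D!3) = 1"
proof -
  have x: "0 < length xs" "1 < length xs" using length_ge k1 by linarith+
  have p0: "(0, 0) \<in> decomp_index D" and p10: "(1, 0) \<in> decomp_index D"
    using row_nonempty x by simp_all
  have p01: "(0, 1) \<in> decomp_index D" using second_piece_index x split by simp
  obtain j l where tl: "\<tau> (0, 1) = (j, l)" by fastforce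
  have "j < q0" using partner_rows_decreasing[OF p01, of 0] tl t0 by simp
  moreover have "2 \<le> j" using double_top_partner_rows[OF k1 p01] tl by simp
  ultimately have "j = 2" "q0 = 3" "q1 = 2" using qs by auto
  then show qq: "q0 = 3" "q1 = 2" by simp_all
  have pl: "(2, l) \<in> decomp_index D" and t2l: "\<tau> (2, l) = (0, 1)"
    using partner_index[OF p01] partner_partner[OF p01] tl \<open>j = 2\<close> by auto
  have t20: "\<tau> (2, 0) = (1, 0)" using partner_partner[OF p10] t1 qq by simp
  have "l \<noteq> 0" using t2l t20 by (cases "l = 0") auto
  moreover have "\<not> 1 < l"
    using partner_rows_decreasing[OF pl, of 1] partner_rows_decreasing[of 2 1 0] pl t2l t20
    by (auto simp: index_iff)
  ultimately have "l = 1" by simp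
  then show "\<tau> (0, 1) = (2, 1)" "length (D!2) = 2"
    using tl \<open>j = 2\<close> partner_in_first_row_imp_last[OF pl] t2l by simp_all
  show "length (D!0) = 2"
  proof (rule ccontr)
    assume "length (D!0) \<noteq> 2"
    then have p2: "(0, 2) \<in> decomp_index D" using p01 by (auto simp: index_iff)
    show False
      using partner_rows_decreasing[OF p2, of 1] double_top_partner_rows[OF k1 p2] tl qq \<open>j = 2\<close>
      by simp
  qed
  show "length (D!1) = 1"
  proof (rule ccontr)
    assume "length (D!1) \<noteq> 1"
    then have "(1, 1) \<in> decomp_index D" using second_piece_index x by simp
    then show False
      using partner_rows_decreasing[of 1 1 0] double_top_partner_rows[OF k1, of 1 1] t1 qq by simp
  qed
  show "length (D!3) = 1"
    using partner_in_first_row_imp_last[of 3 0] partner_index[OF p0] partner_partner[OF p0] t0 qq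
    by simp
qed

text \<open>The split pattern would make \<open>xs!2, xs!3\<close> the shifts of \<open>xs!0, xs!1\<close> with \<open>xs!3\<close> starting
  after \<open>xs!2\<close>, contradicting the canonical listing of the paired part.\<close>
lemma double_top_row0_trivial:
  assumes k1: "k1 = 2" and t0: "\<tau> (0, 0) = (q0, 0)" and t1: "\<tau> (1, 0) = (q1, 0)"
    and k2: "k2 = 2" and qs: "q0 = 2 \<and> q1 = 3 \<or> q0 = 3 \<and> q1 = 2"
  shows "length (D!0) = 1"
proof (rule ccontr)
  assume split: "length (D!0) \<noteq> 1"
  note pattern = double_top_row0_split_pattern[OF assms split]
  have x: "0 < length xs" "1 < length xs" "2 < length xs" "3 < length xs"
    using length_ge k1 k2 by linarith+
  have p0: "(0, 0) \<in> decomp_index D" and p10: "(1, 0) \<in> decomp_index D"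
    and p01: "(0, 1) \<in> decomp_index D"
    using row_nonempty x pattern(4) by (simp_all add: index_iff)
  have shifts: "D!0!0 = nu (D!3!0)" "D!0!1 = nu (D!2!1)" "D!1!0 = nu (D!2!0)"
    using piece_shift[OF p0 t0] piece_shift[OF p01 pattern(3)] piece_shift[OF p10 t1] pattern
    by simp_all
  have rows: "xs!3 = D!3!0" "xs!1 = D!1!0"
    using trivial_row x pattern by simp_all
  have starts: "fst (xs!2) = fst (D!2!1)" "fst (xs!0) = fst (D!0!1)"
    using seg_decomp_last_start[OF row_decomp, of 2] seg_decomp_last_start[OF row_decomp, of 0]
      pattern x by simp_all
  have adj: "snd (D!2!1) = fst (D!2!0) - 1" "snd (D!0!1) = fst (D!0!0) - 1"
    using seg_decomp_adjacent[OF row_decomp, of 2 0] seg_decomp_adjacent[OF row_decomp, of 0 0]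
      pattern x by simp_all
  have ends: "snd (D!2!0) = c - 1" "snd (D!0!0) = c" "snd (xs!0) = c" "snd (xs!2) = c - 1"
    using seg_decomp_first_end[OF row_decomp, of 2] seg_decomp_first_end[OF row_decomp, of 0]
      end_top[of 0] end_middle[of 2] x k1 k2 by simp_all
  have "xs!2 = nu_inv (xs!0)" "xs!3 = nu_inv (xs!1)"
    using shifts rows starts adj ends by (simp_all add: prod_eq_iff)
  then have "fst (xs!3) \<le> fst (xs!2)" using paired_listed_descending[OF k1 k2] by simp
  then show False
    using shifts rows starts adj piece_is_seg[OF p01] by simp
qed

lemma double_top_pairing:
  assumes k1: "k1 = 2"
  obtains q where "k1 \<le> q" "q < k1 + k2" "\<tau> (0, 0) = (q, 0)"
    "length (D!0) = 1" "length (D!q) = 1" "xs!q = nu_inv (xs!0)"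
    "k2 = 2" "xs!(5 - q) = nu_inv (xs!1)"
proof -
  obtain q0 q1 where t0: "\<tau> (0, 0) = (q0, 0)" and t1: "\<tau> (1, 0) = (q1, 0)" and k2: "k2 = 2"
    and qs: "q0 = 2 \<and> q1 = 3 \<or> q0 = 3 \<and> q1 = 2"
    using double_top_partners[OF k1] by blast
  have x: "0 < length xs" "1 < length xs" "q0 < length xs" "q1 < length xs"
    using length_ge k1 k2 qs by linarith+
  have p0: "(0, 0) \<in> decomp_index D" and p10: "(1, 0) \<in> decomp_index D"
    using row_nonempty x by simp_all
  have l0: "length (D!0) = 1" using double_top_row0_trivial[OF k1 t0 t1 k2 qs] .
  have lq0: "length (D!q0) = 1"
    using partner_in_first_row_imp_last[of q0 0] partner_index[OF p0] partner_partner[OF p0] t0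
    by simp
  have l1: "length (D!1) = 1"
  proof (rule ccontr)
    assume "length (D!1) \<noteq> 1"
    then have p11: "(1, 1) \<in> decomp_index D" using second_piece_index x by simp
    obtain j l where tl: "\<tau> (1, 1) = (j, l)" by fastforce
    have "j < q1" "2 \<le> j"
      using partner_rows_decreasing[OF p11, of 0] double_top_partner_rows[OF k1 p11] tl t1 by simp_all
    then have "j = q0" using qs by auto
    then have "l = 0" using partner_bounds[OF p11 tl] lq0 by simp
    then show False using partner_partner[OF p11] partner_partner[OF p0] tl t0 \<open>j = q0\<close> by simp
  qed
  have lq1: "length (D!q1) = 1"
  proof (rule ccontr)
    assume "length (D!q1) \<noteq> 1"
    then have pq11: "(q1, 1) \<in> decomp_index D" using second_piece_index x by simp
    obtain j l where tl: "\<tau> (q1, 1) = (j, l)" by fastforce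
    have "j < 1"
      using partner_rows_decreasing[OF pq11, of 0] tl partner_partner[OF p10] t1 by simp
    then have "j = 0" "l = 0" using partner_bounds[OF pq11 tl] l0 by auto
    then show False using partner_partner[OF pq11] tl t0 by simp
  qed
  have "xs!0 = nu (xs!q0)" "xs!1 = nu (xs!q1)"
    using trivial_row[OF x(1) l0] trivial_row[OF x(2) l1] trivial_row[OF x(3) lq0]
      trivial_row[OF x(4) lq1] piece_shift[OF p0 t0] piece_shift[OF p10 t1] qs by auto
  then have "xs!q0 = nu_inv (xs!0)" "xs!(5 - q0) = nu_inv (xs!1)"
    using qs by auto
  moreover have "k1 \<le> q0" "q0 < k1 + k2" using k1 k2 qs by auto
  ultimately show ?thesis using that[of q0] t0 l0 lq0 k2 by blast
qed

end

section \<open>Removing a pair of rows\<close>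

context relevant_decomp
begin

lemma restrict_rows:
  assumes mono: "strict_mono_on {..<n} g" and range: "g ` {..<n} \<subseteq> {..<length xs}"
    and closed: "\<And>p. p \<in> decomp_index D \<Longrightarrow> fst p \<in> g ` {..<n} \<Longrightarrow> fst (\<tau> p) \<in> g ` {..<n}"
  defines "h \<equiv> the_inv_into {..<n} g"
  shows "relevant_decomp (map (\<lambda>k. xs ! g k) [0..<n]) (map (\<lambda>k. D ! g k) [0..<n])
           (\<lambda>(k, j). (h (fst (\<tau> (g k, j))), snd (\<tau> (g k, j))))"
    (is "relevant_decomp ?xs ?D ?\<tau>")
proof -
  have inj: "inj_on g {..<n}" using strict_mono_on_imp_inj_on[OF mono] .
  have hg: "h (g k) = k" if "k < n" for k using the_inv_into_f_f[OF inj] that by (simp add: h_def)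
  have gh: "g (h i) = i" "h i < n" if "i \<in> g ` {..<n}" for i
    using f_the_inv_into_f[OF inj that] the_inv_into_into[OF inj that, of "{..<n}"] by (auto simp: h_def)
  have index: "(k, j) \<in> decomp_index ?D \<longleftrightarrow> k < n \<and> (g k, j) \<in> decomp_index D" for k j
    using range by (auto simp: decomp_index_def length_D)
  have partner: "?\<tau> (k, j) = (h (fst (\<tau> (g k, j))), snd (\<tau> (g k, j)))" for k j by simp
  have partner_row: "g (fst (?\<tau> p)) = fst (\<tau> (g (fst p), snd p))" "fst (?\<tau> p) < n"
    if "p \<in> decomp_index ?D" for p
    using that closed[of "(g (fst p), snd p)"] gh by (cases p; auto simp: index)+
  show ?thesis
  proof
    show "is_decomp ?xs ?D"
      using range row_decomp by (auto simp: is_decomp_def)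
    show "\<forall>p\<in>decomp_index ?D. ?\<tau> p \<in> decomp_index ?D \<and> ?\<tau> (?\<tau> p) = p \<and> ?\<tau> p \<noteq> p"
    proof
      fix p assume p: "p \<in> decomp_index ?D"
      obtain k j where kj: "p = (k, j)" by fastforce
      obtain a b where ab: "\<tau> (g k, j) = (a, b)" by fastforce
      have gkj: "(g k, j) \<in> decomp_index D" "k < n" using p kj index by auto
      have a: "a \<in> g ` {..<n}" using closed[OF gkj(1)] gkj(2) ab by auto
      have partner_back: "\<tau> (a, b) = (g k, j)" using partner_partner[OF gkj(1)] ab by simp
      have "?\<tau> p = (h a, b)" using kj ab by simp
      moreover have "(h a, b) \<in> decomp_index ?D"
        using index gh[OF a] partner_index[OF gkj(1)] ab by simp
      moreover have "?\<tau> (h a, b) = p" using gh[OF a] partner_back hg[OF gkj(2)] kj by simp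
      moreover have "(h a, b) \<noteq> p"
        using partner_ne[OF gkj(1)] ab gh[OF a] kj by auto
      ultimately show "?\<tau> p \<in> decomp_index ?D \<and> ?\<tau> (?\<tau> p) = p \<and> ?\<tau> p \<noteq> p" by simp
    qed
    show "\<forall>i j. (i, Suc j) \<in> decomp_index ?D \<longrightarrow> fst (?\<tau> (i, Suc j)) < fst (?\<tau> (i, j))"
    proof (intro allI impI)
      fix i j assume p: "(i, Suc j) \<in> decomp_index ?D"
      then have p': "(i, j) \<in> decomp_index ?D" by (simp add: index index_iff)
      have "fst (\<tau> (g i, Suc j)) < fst (\<tau> (g i, j))" using row_decreasing p index by blast
      then show "fst (?\<tau> (i, Suc j)) < fst (?\<tau> (i, j))"
        using partner_row[OF p] partner_row[OF p'] strict_mono_on_less[OF mono] by fastforce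
    qed
    show "\<forall>p\<in>decomp_index ?D. lex_less p (?\<tau> p) \<longrightarrow> piece ?D p = nu (piece ?D (?\<tau> p))"
    proof (intro ballI impI)
      fix p assume p: "p \<in> decomp_index ?D" and less: "lex_less p (?\<tau> p)"
      obtain k j where kj: "p = (k, j)" by fastforce
      have gkj: "(g k, j) \<in> decomp_index D" "k < n" using p kj index by auto
      have "lex_less (g k, j) (\<tau> (g k, j))"
        using less partner_row[OF p] strict_mono_on_less[OF mono, of k "fst (?\<tau> p)"] gkj(2) kj
        by (auto simp: lex_less_def)
      then have "piece D (g k, j) = nu (piece D (\<tau> (g k, j)))" using shift gkj(1) by blast
      then show "piece ?D p = nu (piece ?D (?\<tau> p))"
        using partner_row[OF p] gkj(2) kj by (simp add: piece_def)
    qed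
  qed
qed

lemma partner_rows_outside_pair:
  assumes t0: "\<tau> (0, 0) = (q, 0)" and l0: "length (D!0) = 1" and lq: "length (D!q) = 1"
    and p: "p \<in> decomp_index D" "fst p \<noteq> 0" "fst p \<noteq> q"
  shows "fst (\<tau> p) \<noteq> 0 \<and> fst (\<tau> p) \<noteq> q"
proof -
  have p0: "(0, 0) \<in> decomp_index D" using p(1) l0 by (cases p) (auto simp: index_iff)
  have tq: "\<tau> (q, 0) = (0, 0)" using partner_partner[OF p0] t0 by simp
  have "\<tau> p \<noteq> (0, 0)" "\<tau> p \<noteq> (q, 0)"
    using partner_partner[OF p(1)] t0 tq p(2,3) by auto
  moreover obtain a b where ab: "\<tau> p = (a, b)" by fastforce
  moreover have "b < length (D!a)" using partner_index[OF p(1)] ab by (simp add: index_iff)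
  then have "a = 0 \<Longrightarrow> b = 0" "a = q \<Longrightarrow> b = 0" using l0 lq by auto
  ultimately show ?thesis by auto
qed

end

definition kept_row :: "nat \<Rightarrow> nat \<Rightarrow> nat" where
  "kept_row q k = (if k < q - 1 then Suc k else k + 2)"

definition remove_first_and :: "nat \<Rightarrow> 'a list \<Rightarrow> 'a list" where
  "remove_first_and q L = map (\<lambda>k. L ! kept_row q k) [0..<length L - 2]"

lemma kept_row_strict_mono: "strict_mono_on A (kept_row q)"
  by (auto simp: strict_mono_on_def kept_row_def)

lemma kept_row_image:
  assumes "0 < q" "q < n"
  shows "kept_row q ` {..<n - 2} = {..<n} - {0, q}"
proof
  show "kept_row q ` {..<n - 2} \<subseteq> {..<n} - {0, q}"
    using assms by (auto simp: kept_row_def)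
  show "{..<n} - {0, q} \<subseteq> kept_row q ` {..<n - 2}"
  proof
    fix i assume i: "i \<in> {..<n} - {0, q}"
    then have "kept_row q (if i < q then i - 1 else i - 2) = i" "(if i < q then i - 1 else i - 2) < n - 2"
      using assms by (auto simp: kept_row_def)
    then show "i \<in> kept_row q ` {..<n - 2}" by (metis imageI lessThan_iff)
  qed
qed

lemma remove_first_and_eq:
  assumes "0 < q" "q < length L"
  shows "remove_first_and q L = tl (take q L) @ drop (Suc q) L"
proof (rule nth_equalityI)
  show "length (remove_first_and q L) = length (tl (take q L) @ drop (Suc q) L)"
    using assms by (simp add: remove_first_and_def)
  fix k assume "k < length (remove_first_and q L)"
  then show "remove_first_and q L ! k = (tl (take q L) @ drop (Suc q) L) ! k"
    using assms by (auto simp: remove_first_and_def kept_row_def nth_append nth_tl)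
qed

context canonical_top
begin

lemma lower_ends: "sorted_wrt (>) lower_ends" "set lower_ends = {x \<in> snd ` set_mset m. x < c - 1}"
  by (simp_all add: lower_ends_def sorted_wrt_rev)

lemma blocks_remove_top_pair:
  assumes "k1 \<le> q" "q < k1 + k2"
  shows "block (m - {#xs!0, xs!q#}) c = block m c - {#xs!0#}"
    "block (m - {#xs!0, xs!q#}) (c - 1) = block m (c - 1) - {#xs!q#}"
    "x \<noteq> c \<Longrightarrow> x \<noteq> c - 1 \<Longrightarrow> block (m - {#xs!0, xs!q#}) x = block m x"
proof -
  have "snd (xs!0) = c" "snd (xs!q) = c - 1"
    using end_top[of 0] k1_bounds end_middle[OF assms] by simp_all
  then have "block {#xs!0, xs!q#} x =
      (if x = c then {#xs!0#} else {#}) + (if x = c - 1 then {#xs!q#} else {#})" for x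
    by (auto simp: block_def)
  then show "block (m - {#xs!0, xs!q#}) c = block m c - {#xs!0#}"
    "block (m - {#xs!0, xs!q#}) (c - 1) = block m (c - 1) - {#xs!q#}"
    "x \<noteq> c \<Longrightarrow> x \<noteq> c - 1 \<Longrightarrow> block (m - {#xs!0, xs!q#}) x = block m x"
    by (simp_all add: block_diff)
qed

lemma canon_aux_remove_top_pair_lower:
  "k1 \<le> q \<Longrightarrow> q < k1 + k2 \<Longrightarrow> canon_aux (m - {#xs!0, xs!q#}) r lower_ends = canon_aux m r lower_ends"
  using blocks_remove_top_pair(3) lower_ends(2) by (intro canon_aux_cong) auto

lemma canonical_order_remove_top_pair_eq:
  assumes q: "k1 \<le> q" "q < k1 + k2"
    and P: "sorted_wrt (>) (P @ lower_ends)"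
      "set P = {x. (x = c \<or> x = c - 1) \<and> block (m - {#xs!0, xs!q#}) x \<noteq> {#}}"
  shows "canonical_order (m - {#xs!0, xs!q#}) = canon_aux (m - {#xs!0, xs!q#}) {#} (P @ lower_ends)"
proof -
  let ?m' = "m - {#xs!0, xs!q#}"
  have "x \<in> set (P @ lower_ends) \<longleftrightarrow> block ?m' x \<noteq> {#}" for x
  proof (cases "x = c \<or> x = c - 1")
    case False
    have "x < c - 1" if "x \<in> snd ` set_mset m" using top_max[OF that] False by linarith
    then show ?thesis
      using False P(2) lower_ends(2) blocks_remove_top_pair(3)[OF q, of x]
        block_nonempty_iff[of m x] by auto
  qed (use P(2) lower_ends(2) in auto)
  then have "set (P @ lower_ends) = snd ` set_mset ?m'"
    using block_nonempty_iff by blast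
  then show ?thesis using canonical_order_eq_canon_aux[OF P(1)] by blast
qed

lemma remove_first_and_split:
  "k1 \<le> q \<Longrightarrow> q < k1 + k2 \<Longrightarrow> xs = L \<Longrightarrow> remove_first_and q xs = tl (take q L) @ drop (Suc q) L"
  using remove_first_and_eq[of q xs] k1_bounds length_ge by simp

lemma canonical_order_remove_top_pair_1_1:
  assumes k: "k1 = 1" "k2 = 1" and q: "k1 \<le> q" "q < k1 + k2" "xs!q = nu_inv (xs!0)"
  shows "canonical_order (m - {#xs!0, xs!q#}) = remove_first_and q xs"
proof -
  have "q = 1" using q k by simp
  have xs: "xs = [xs!0, xs!1] @ T" using xs_split A_single M_single k by simp
  have "block m c = {#xs!0#}" "block m (c - 1) = {#xs!1#}"
    using mset_A mset_M A_single M_single k by simp_all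
  then have "block (m - {#xs!0, xs!q#}) c = {#}" "block (m - {#xs!0, xs!q#}) (c - 1) = {#}"
    "unpaired_below m c = {#}"
    using blocks_remove_top_pair[OF q(1,2)] q(3) \<open>q = 1\<close>
    by (simp_all add: unpaired_below_def paired_below_def)
  moreover have "set [] = {x. (x = c \<or> x = c - 1) \<and> block (m - {#xs!0, xs!q#}) x \<noteq> {#}}"
    using calculation by auto
  ultimately have "canonical_order (m - {#xs!0, xs!q#}) = T"
    using canonical_order_remove_top_pair_eq[OF q(1,2), of "[]"] lower_ends
      canon_aux_remove_top_pair_lower[OF q(1,2)] by (simp add: T_def)
  also have "T = remove_first_and q xs"
    using remove_first_and_split[OF q(1,2) xs] \<open>q = 1\<close> by simp
  finally show ?thesis .
qed

lemma canonical_order_remove_top_pair_1_2: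
  assumes k: "k1 = 1" "k2 = 2" and q: "k1 \<le> q" "q < k1 + k2" "xs!q = nu_inv (xs!0)"
  shows "canonical_order (m - {#xs!0, xs!q#}) = remove_first_and q xs"
proof -
  define other where "other = 3 - q"
  have qs: "q = 1 \<and> other = 2 \<or> q = 2 \<and> other = 1" using q k by (auto simp: other_def)
  have xs: "xs = [xs!0, xs!1, xs!2] @ T"
    using xs_split A_single M_double k by (simp add: numeral_eq_Suc)
  have block_c: "block m c = {#xs!0#}" and block_c1: "block m (c - 1) = {#xs!q, xs!other#}"
    using mset_A[symmetric] mset_M[symmetric] A_single M_double k qs by (auto simp: numeral_eq_Suc)
  then have "paired_below m c = {#xs!q#}" and blocks': "block (m - {#xs!0, xs!q#}) c = {#}"
    "block (m - {#xs!0, xs!q#}) (c - 1) = {#xs!other#}"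
    using blocks_remove_top_pair[OF q(1,2)] q(3) by (simp_all add: paired_below_def)
  then have "unpaired_below m c = {#xs!other#}"
    using block_c1 by (simp add: unpaired_below_def)
  moreover have "snd (xs!other) = c - 1" using end_middle qs k by auto
  moreover have "set [c - 1] = {x. (x = c \<or> x = c - 1) \<and> block (m - {#xs!0, xs!q#}) x \<noteq> {#}}"
    using blocks' by auto
  ultimately have "canonical_order (m - {#xs!0, xs!q#}) = [xs!other] @ T"
    using canonical_order_remove_top_pair_eq[OF q(1,2), of "[c - 1]"] blocks' lower_ends
      canon_aux_remove_top_pair_lower[OF q(1,2)]
    by (simp add: T_def Let_def asc_list_single)
  also have "\<dots> = remove_first_and q xs"
    using remove_first_and_split[OF q(1,2) xs] qs by (auto simp: numeral_eq_Suc)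
  finally show ?thesis .
qed

lemma canonical_order_remove_top_pair_2_2:
  assumes k: "k1 = 2" "k2 = 2" and q: "k1 \<le> q" "q < k1 + k2" "xs!q = nu_inv (xs!0)"
    and other: "xs!(5 - q) = nu_inv (xs!1)"
  shows "canonical_order (m - {#xs!0, xs!q#}) = remove_first_and q xs"
proof -
  define other where "other = 5 - q"
  have qs: "q = 2 \<and> other = 3 \<or> q = 3 \<and> other = 2" using q k by (auto simp: other_def)
  have xs: "xs = [xs!0, xs!1, xs!2, xs!3] @ T"
    using xs_split A_double M_double k by (simp add: numeral_eq_Suc)
  have "block m c = {#xs!0, xs!1#}" "block m (c - 1) = {#xs!q, xs!other#}"
    using mset_A[symmetric] mset_M[symmetric] A_double M_double k qs by (auto simp: numeral_eq_Suc)
  then have "unpaired_below m c = {#}" and blocks': "block (m - {#xs!0, xs!q#}) c = {#xs!1#}"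
    "block (m - {#xs!0, xs!q#}) (c - 1) = {#xs!other#}"
    using blocks_remove_top_pair[OF q(1,2)] q(3) other
    by (simp_all add: unpaired_below_def paired_below_def other_def)
  moreover have "snd (xs!other) = c - 1" "snd (xs!1) = c" using end_middle end_top qs k by auto
  moreover have "set [c, c - 1] = {x. (x = c \<or> x = c - 1) \<and> block (m - {#xs!0, xs!q#}) x \<noteq> {#}}"
    using blocks' by auto
  moreover have "\<forall>x\<in>set lower_ends. x < c" using lower_ends(2) by auto
  ultimately have "canonical_order (m - {#xs!0, xs!q#}) = [xs!1, xs!other] @ T"
    using canonical_order_remove_top_pair_eq[OF q(1,2), of "[c, c - 1]"] lower_ends
      canon_aux_remove_top_pair_lower[OF q(1,2)] other
    by (simp add: T_def Let_def asc_list_single other_def)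
  also have "\<dots> = remove_first_and q xs"
    using remove_first_and_split[OF q(1,2) xs] qs by (auto simp: numeral_eq_Suc)
  finally show ?thesis .
qed

lemma canonical_order_remove_top_pair:
  assumes q: "k1 \<le> q" "q < k1 + k2" "xs!q = nu_inv (xs!0)"
    and both_paired: "k1 = 2 \<Longrightarrow> k2 = 2 \<and> xs!(5 - q) = nu_inv (xs!1)"
  shows "canonical_order (m - {#xs!0, xs!q#}) = remove_first_and q xs"
proof -
  consider "k1 = 1" "k2 = 1" | "k1 = 1" "k2 = 2" | "k1 = 2" "k2 = 2"
    using k1_bounds k2_le q(1,2) both_paired by linarith
  then show ?thesis
    using canonical_order_remove_top_pair_1_1 canonical_order_remove_top_pair_1_2
      canonical_order_remove_top_pair_2_2 q both_paired by cases blast+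
qed

end

lemma add_mset_pair_subset: "a \<in># m \<Longrightarrow> b \<in># m \<Longrightarrow> a \<noteq> b \<Longrightarrow> {#a, b#} \<subseteq># m"
  by (simp add: insert_subset_eq_iff in_diff_count)

context canonical_top
begin

lemma top_pairing:
  obtains q where "k1 \<le> q" "q < k1 + k2" "\<tau> (0, 0) = (q, 0)"
    "length (D!0) = 1" "length (D!q) = 1" "xs!q = nu_inv (xs!0)"
    "k1 = 2 \<Longrightarrow> k2 = 2 \<and> xs!(5 - q) = nu_inv (xs!1)"
proof (cases "k1 = 1")
  case True
  obtain q where "k1 \<le> q" "q < k1 + k2" "\<tau> (0, 0) = (q, 0)"
    "length (D!0) = 1" "length (D!q) = 1" "xs!q = nu_inv (xs!0)"
    using single_top_pairing[OF True] by blast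
  then show ?thesis using that True by simp
next
  case False
  then have "k1 = 2" using k1_bounds by simp
  then show ?thesis using double_top_pairing that by metis
qed

lemma top_pair_subset:
  assumes "k1 \<le> q" "q < k1 + k2" "xs!q = nu_inv (xs!0)"
  shows "{#xs!0, xs!q#} \<subseteq># m"
proof (rule add_mset_pair_subset)
  have "0 < length xs" "q < length xs" using assms k1_bounds length_ge by linarith+
  then show "xs!0 \<in># m" "xs!q \<in># m"
    using nth_mem_mset mset_canonical_order[of m] xs_canonical by metis+
  have "snd (xs!q) \<noteq> snd (xs!0)" using assms(3) by simp
  then show "xs!0 \<noteq> xs!q" by metis
qed

end

context relevant_decomp
begin

lemma relevant_remove_paired_rows:
  assumes q: "0 < q" "q < length xs" and t0: "\<tau> (0, 0) = (q, 0)"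
    and l0: "length (D!0) = 1" and lq: "length (D!q) = 1"
  shows "is_decomp (remove_first_and q xs) (remove_first_and q D) \<and> relevant (remove_first_and q D)"
proof -
  let ?G = "kept_row q ` {..<length xs - 2}"
  have image: "?G = {..<length xs} - {0, q}" using kept_row_image[OF q] .
  have "relevant_decomp (map (\<lambda>k. xs ! kept_row q k) [0..<length xs - 2])
      (map (\<lambda>k. D ! kept_row q k) [0..<length xs - 2])
      (\<lambda>(k, j). (the_inv_into {..<length xs - 2} (kept_row q) (fst (\<tau> (kept_row q k, j))),
        snd (\<tau> (kept_row q k, j))))"
  proof (rule restrict_rows[OF kept_row_strict_mono])
    show "?G \<subseteq> {..<length xs}" using image by blast
    fix p assume p: "p \<in> decomp_index D" "fst p \<in> ?G"
    then have "fst (\<tau> p) \<noteq> 0 \<and> fst (\<tau> p) \<noteq> q"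
      using partner_rows_outside_pair[OF t0 l0 lq p(1)] image by simp
    moreover have "fst (\<tau> p) < length xs"
      using partner_index[OF p(1)] by (cases "\<tau> p") (simp add: index_iff)
    ultimately show "fst (\<tau> p) \<in> ?G" using image by simp
  qed
  moreover have "remove_first_and q D = map (\<lambda>k. D ! kept_row q k) [0..<length xs - 2]"
    using length_D by (simp add: remove_first_and_def)
  ultimately show ?thesis
    using relevant_decomp.relevant_D relevant_decomp.decomp by (simp add: remove_first_and_def)
qed

end

lemma trivial_decomp_remove_first_and:
  assumes "trivial_decomp (remove_first_and q D)" "0 < q" "q < length D"
    and "length (D!0) = 1" "length (D!q) = 1"
  shows "trivial_decomp D"
  unfolding trivial_decomp_def
proof (intro allI impI)
  fix i assume i: "i < length D"
  show "length (D!i) = 1"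
  proof (cases "i = 0 \<or> i = q")
    case False
    then obtain k where "k < length D - 2" "kept_row q k = i"
      using kept_row_image[OF assms(2,3)] i by (metis DiffI empty_iff imageE insertE lessThan_iff)
    then show ?thesis
      using assms(1) by (auto simp: trivial_decomp_def remove_first_and_def)
  qed (use assms in auto)
qed

lemma speh_type_add_pair:
  assumes "speh_type m" "is_seg s"
  shows "speh_type (m + {#nu s, s#})"
proof -
  obtain n where n: "in_OZ n" "m = n + image_mset nu n" using assms(1) by (auto simp: speh_type_def)
  then have "m + {#nu s, s#} = add_mset s n + image_mset nu (add_mset s n)" by simp
  moreover have "in_OZ (add_mset s n)" using n(1) assms(2) by (simp add: in_OZ_def)
  ultimately show ?thesis by (auto simp: speh_type_def)
qed

lemma canonical_order_empty [simp]: "canonical_order {#} = []"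
  using canonical_order_eq_canon_aux[of "[]" "{#}"] by simp

lemma relevant_canonical_trivial_speh:
  assumes "in_OZ m" "\<And>c. size (block m c) \<le> 2"
    and "is_decomp (canonical_order m) D" "relevant D"
  shows "trivial_decomp D \<and> speh_type m"
  using assms
proof (induction "size m" arbitrary: m D rule: less_induct)
  case less
  show ?case
  proof (cases "m = {#}")
    case True
    then show ?thesis
      using less.prems(3) by (auto simp: is_decomp_def trivial_decomp_def speh_type_def in_OZ_def)
  next
    case False
    define xs where "xs = canonical_order m"
    define c where "c = Max (snd ` set_mset m)"
    obtain \<tau> where R: "relevant_decomp xs D \<tau>"
      using less.prems(3,4) by (elim relevantE) (auto intro: relevant_decomp.intro simp: xs_def)
    have "finite (snd ` set_mset m)" "snd ` set_mset m \<noteq> {}" using False by auto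
    then interpret canonical_top xs D \<tau> m c
      using less.prems(2) by (intro canonical_top.intro canonical_top_axioms.intro R) (auto simp: xs_def c_def)
    obtain q where q: "k1 \<le> q" "q < k1 + k2" "\<tau> (0, 0) = (q, 0)" "length (D!0) = 1"
      "length (D!q) = 1" "xs!q = nu_inv (xs!0)" "k1 = 2 \<Longrightarrow> k2 = 2 \<and> xs!(5 - q) = nu_inv (xs!1)"
      using top_pairing by blast
    have q_pos: "0 < q" and q_less: "q < length xs" using q k1_bounds length_ge by linarith+
    have sub: "{#xs!0, xs!q#} \<subseteq># m" using top_pair_subset[OF q(1,2,6)] .
    define m' where "m' = m - {#xs!0, xs!q#}"
    have "size m' < size m"
      using size_Diff_submset[OF sub] size_mset_mono[OF sub] by (simp add: m'_def)
    moreover have "in_OZ m'" using less.prems(1) by (auto simp: m'_def in_OZ_def dest: in_diffD)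
    moreover have "size (block m' x) \<le> 2" for x
      using less.prems(2)[of x] size_mset_mono[of "block m' x" "block m x"]
      by (simp add: m'_def block_diff)
    moreover have "is_decomp (canonical_order m') (remove_first_and q D)"
      and "relevant (remove_first_and q D)"
      using canonical_order_remove_top_pair[OF q(1,2,6,7)] relevant_remove_paired_rows[OF q_pos q_less q(3-5)]
      by (simp_all add: m'_def)
    ultimately have IH: "trivial_decomp (remove_first_and q D) \<and> speh_type m'"
      using less.hyps by blast
    then have "trivial_decomp D"
      using trivial_decomp_remove_first_and[of q D] q_pos q_less q(4,5) length_D by simp
    moreover have "m = m' + {#nu (xs!q), xs!q#}"
      using q(6) subset_mset.diff_add[OF sub] by (simp add: m'_def)
    moreover have "is_seg (xs!q)" using less.prems(1) sub by (auto simp: in_OZ_def dest: mset_subset_eqD)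
    ultimately show ?thesis using IH speh_type_add_pair by simp
  qed
qed

theorem mainTheorem11:
  fixes m :: "seg multiset"
  assumes "in_OZ m"
    and "\<forall>c. size (block m c) \<le> 2"
  shows "(\<forall>D. is_decomp (canonical_order m) D \<and> relevant D \<longrightarrow> trivial_decomp D)
         \<and> (distinguished m \<longrightarrow> speh_type m)"
proof (intro conjI allI impI)
  fix D assume "is_decomp (canonical_order m) D \<and> relevant D"
  then show "trivial_decomp D" using relevant_canonical_trivial_speh assms by blast
next
  assume "distinguished m"
  then obtain D where "is_decomp (canonical_order m) D" "relevant D"
    using mset_canonical_order standard_canonical_order unfolding distinguished_def by blast
  then show "speh_type m" using relevant_canonical_trivial_speh assms by blast
qed

end
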